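(* Let $d\in\mathbb{N}$, $0<A\le1$, and let $f$ be a measurable function on $[0,1]^d$. Then $$\|f\|^{(1)}_{2,A}\le\|f\|_{2,A}\le4\,\|f\|^{(1)}_{2,A},$$ where $\|f\|^{(1)}_{2,A}=\sup_{0<t<1}\frac{f^*(t)}{\sqrt{A\log(1/t)+1}}$ and $\|f\|_{2,A}=\inf\{\lambda>0:\int_{[0,1]^d}\Phi_{2,A}(|f(x)|/\lambda)\,dx\le1\}$.
   Context: $\Phi_{2,A}(u)=u^2$ for $0\le u\le1$ and $\Phi_{2,A}(u)=\exp\big((u^2-1)/A\big)$ for $u>1$. $f^*(t)=\inf\{s\ge0:|\{x\in[0,1]^d:|f(x)|>s\}|\le t\}$ is the non-increasing rearrangement of $f$ with respect to Lebesgue measure. *)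

theory Defs
  imports "HOL-Analysis.Analysis"
begin

definition Phi2 :: "real \<Rightarrow> real \<Rightarrow> real" where
  "Phi2 A u = (if u \<le> 1 then u\<^sup>2 else exp ((u\<^sup>2 - 1) / A))"

text \<open>Non-increasing rearrangement of f on the unit cube [0,1]^d = cbox 0 One,
  with respect to Lebesgue measure (extended-real valued).\<close>
definition rearr :: "('a::euclidean_space \<Rightarrow> real) \<Rightarrow> real \<Rightarrow> ereal" where
  "rearr f t = Inf (ereal ` {s::real. 0 \<le> s \<and>
      emeasure lebesgue {x \<in> cbox (0::'a) One. \<bar>f x\<bar> > s} \<le> ennreal t})"

definition norm1 :: "real \<Rightarrow> ('a::euclidean_space \<Rightarrow> real) \<Rightarrow> ereal" where
  "norm1 A f = (SUP t\<in>{0<..<1::real}. rearr f t / ereal (sqrt (A * ln (1 / t) + 1)))"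

text \<open>The Orlicz (Luxemburg) norm ||f||_{2,A}; infinite if no lambda qualifies.\<close>
definition orlicz_norm :: "real \<Rightarrow> ('a::euclidean_space \<Rightarrow> real) \<Rightarrow> ereal" where
  "orlicz_norm A f = Inf (ereal ` {l::real. 0 < l \<and>
      (\<integral>\<^sup>+ x. ennreal (Phi2 A (\<bar>f x\<bar> / l)) \<partial>(lebesgue_on (cbox (0::'a) One))) \<le> 1})"

end

theory Submission
  imports Defs
begin

text \<open>
  Write q(t) = sqrt (A ln (1/t) + 1), so that Phi_{2,A}(q(t)) = 1/t. The lower bound is Markov's
  inequality: if the Phi_{2,A}-integral of |f|/l is at most 1, then |f| > l q(t) on a set of
  measure at most t, i.e. f*(t) <= l q(t).

  Conversely, f*(t) <= N q(t) for all t yields the tail bound |{|f| > s}| <= exp (-(u^2 - 1)/A) for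
  s > N u, u > 1. Split the cube into the part |f| <= 2N, where Phi_{2,A}(|f|/4N) <= 1/4, and the
  layers N (j+2) < |f| <= N (j+3), the j-th of which contributes at most
  Phi_{2,A}((j+3)/4) exp (-((j+1)^2 - 1)/A) <= 9/16 5^-j, using A <= 1. Altogether the
  Phi_{2,A}-integral of |f|/4N is at most 1/4 + 45/64 <= 1.
\<close>

lemma Phi2_nonneg: "0 \<le> Phi2 A u"
  by (simp add: Phi2_def)

lemma Phi2_eq_exp: "1 \<le> u \<Longrightarrow> Phi2 A u = exp ((u\<^sup>2 - 1) / A)"
  by (auto simp: Phi2_def)

lemma Phi2_mono:
  assumes "0 < A" "0 \<le> u" "u \<le> v"
  shows "Phi2 A u \<le> Phi2 A v"
proof -
  have "u\<^sup>2 \<le> v\<^sup>2" using assms by (intro power_mono) auto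
  consider "v \<le> 1" | "u \<le> 1" "1 < v" | "1 < u" by linarith
  then show ?thesis
  proof cases
    case 1
    then show ?thesis using assms \<open>u\<^sup>2 \<le> v\<^sup>2\<close> by (simp add: Phi2_def)
  next
    case 2
    then have "Phi2 A u \<le> 1" using assms by (simp add: Phi2_def power_le_one)
    also have "1 \<le> exp ((v\<^sup>2 - 1) / A)" using 2 assms by (simp add: one_le_power)
    finally show ?thesis using 2 by (simp add: Phi2_eq_exp)
  next
    case 3
    then show ?thesis
      using assms \<open>u\<^sup>2 \<le> v\<^sup>2\<close> by (simp add: Phi2_eq_exp divide_right_mono)
  qed
qed

lemma borel_measurable_Phi2 [measurable]:
  assumes [measurable]: "g \<in> borel_measurable M"
  shows "(\<lambda>x. Phi2 A (g x)) \<in> borel_measurable M"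
  unfolding Phi2_def by measurable

lemma one_le_mult_Phi2:
  assumes "0 < A" "0 < t" "t \<le> 1" "sqrt (A * ln (1 / t) + 1) \<le> v"
  shows "1 \<le> t * Phi2 A v"
proof -
  define q where "q = sqrt (A * ln (1 / t) + 1)"
  have "0 \<le> A * ln (1 / t)" using assms by simp
  then have "1 \<le> q" and q_sq: "q\<^sup>2 = A * ln (1 / t) + 1" by (simp_all add: q_def)
  have "1 / t = exp ((q\<^sup>2 - 1) / A)" using assms q_sq by simp
  also have "\<dots> \<le> exp ((v\<^sup>2 - 1) / A)"
  proof -
    have "q\<^sup>2 \<le> v\<^sup>2" using assms \<open>1 \<le> q\<close> by (intro power_mono) (auto simp: q_def)
    then show ?thesis using assms by (simp add: divide_right_mono)
  qed
  also have "\<dots> = Phi2 A v"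
    using assms(4) \<open>1 \<le> q\<close> q_def by (intro Phi2_eq_exp[symmetric]) linarith
  finally show ?thesis using assms by (simp add: field_simps)
qed

lemma emeasure_abs_greater_le_of_Phi2_integral:
  assumes "0 < A" "0 < l" "0 < t" "t \<le> 1"
    and [measurable]: "g \<in> borel_measurable M"
    and "(\<integral>\<^sup>+ x. ennreal (Phi2 A (\<bar>g x\<bar> / l)) \<partial>M) \<le> 1"
  shows "emeasure M {x \<in> space M. l * sqrt (A * ln (1 / t) + 1) < \<bar>g x\<bar>} \<le> ennreal t"
proof -
  let ?Phi = "\<lambda>x. ennreal (Phi2 A (\<bar>g x\<bar> / l))"
  have "{x \<in> space M. l * sqrt (A * ln (1 / t) + 1) < \<bar>g x\<bar>}
      \<subseteq> {x \<in> space M. 1 \<le> ennreal t * ?Phi x}"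
  proof clarify
    fix x assume "l * sqrt (A * ln (1 / t) + 1) < \<bar>g x\<bar>"
    then have "sqrt (A * ln (1 / t) + 1) \<le> \<bar>g x\<bar> / l" using assms by (simp add: field_simps)
    then have "1 \<le> t * Phi2 A (\<bar>g x\<bar> / l)" using assms by (intro one_le_mult_Phi2) auto
    then show "1 \<le> ennreal t * ?Phi x"
      using assms Phi2_nonneg by (simp add: ennreal_mult'[symmetric] ennreal_leI)
  qed
  then have "emeasure M {x \<in> space M. l * sqrt (A * ln (1 / t) + 1) < \<bar>g x\<bar>}
      \<le> emeasure M {x \<in> space M. 1 \<le> ennreal t * ?Phi x}"
    by (intro emeasure_mono) measurable
  also have "\<dots> \<le> ennreal t * (\<integral>\<^sup>+ x. ?Phi x * indicator (space M) x \<partial>M)"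
    by (intro nn_integral_Markov_inequality) measurable
  also have "(\<integral>\<^sup>+ x. ?Phi x * indicator (space M) x \<partial>M) = (\<integral>\<^sup>+ x. ?Phi x \<partial>M)"
    by (intro nn_integral_cong) simp
  also have "ennreal t * \<dots> \<le> ennreal t * 1"
    using assms by (intro mult_left_mono) auto
  finally show ?thesis by simp
qed

lemma Phi2_layer_weight_le:
  assumes "0 < A" "A \<le> 1"
  shows "Phi2 A ((real j + 3) / 4) * exp (- (((real j + 1)\<^sup>2 - 1) / A)) \<le> 9/16 * (1/5) ^ j"
proof (cases "j = 0")
  case True
  then show ?thesis by (simp add: Phi2_def power2_eq_square)
next
  case False
  then have j: "1 \<le> real j" by simp
  define X where "X = ((real j + 3) / 4)\<^sup>2 - (real j + 1)\<^sup>2"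
  \<comment> \<open>X + 2j + 1 = ((j + 3)/4)^2 - j^2, and (j + 3)/4 <= j\<close>
  have X_le: "X \<le> - (2 * real j + 1)"
  proof -
    have "((real j + 3) / 4)\<^sup>2 \<le> (real j)\<^sup>2" using j by (intro power_mono) auto
    then show ?thesis by (simp add: X_def power2_eq_square algebra_simps)
  qed
  have "Phi2 A ((real j + 3) / 4) * exp (- (((real j + 1)\<^sup>2 - 1) / A)) = exp (X / A)"
    using j by (simp add: Phi2_eq_exp X_def diff_divide_distrib flip: exp_add)
  also have "\<dots> \<le> exp X"
  proof -
    have "X * 1 \<le> X * A" using assms X_le j by (intro mult_left_mono_neg) auto
    then show ?thesis using assms by (simp add: divide_le_eq)
  qed
  also have "\<dots> \<le> exp (- (2 * real j + 1))" using X_le by simp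
  also have "\<dots> = 1 / (exp 1 * exp 2 ^ j)"
    by (simp add: exp_minus field_simps flip: exp_add exp_of_nat_mult)
  also have "\<dots> \<le> 1 / (2 * 5 ^ j)"
  proof -
    have "(5::real) \<le> exp 2"
      using exp_lower_Taylor_quadratic[of "2::real"] by simp
    moreover have "(2::real) \<le> exp 1" using exp_ge_add_one_self[of 1] by simp
    ultimately show ?thesis by (intro divide_left_mono mult_mono power_mono) auto
  qed
  also have "\<dots> \<le> 9/16 * (1/5) ^ j" by (simp add: field_simps)
  finally show ?thesis .
qed

lemma Phi2_quarter_le_layers:
  assumes "0 < A" "0 < n" "0 \<le> v"
  shows "ennreal (Phi2 A (v / (4 * n))) \<le> ennreal (1/4)
    + (\<Sum>j. ennreal (Phi2 A ((real j + 3) / 4)) * indicator {n * (real j + 2)<..n * (real j + 3)} v)"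
proof (cases "v \<le> 2 * n")
  case True
  have "Phi2 A (v / (4 * n)) \<le> Phi2 A (1/2)"
    using assms True by (intro Phi2_mono) (auto simp: field_simps)
  also have "\<dots> = 1/4" by (simp add: Phi2_def power2_eq_square)
  finally show ?thesis by (intro add_increasing2 ennreal_leI) auto
next
  case False
  define w where "w i = ennreal (Phi2 A ((real i + 3) / 4)) * indicator {n * (real i + 2)<..n * (real i + 3)} v"
    for i :: nat
  define j where "j = nat (\<lceil>v / n\<rceil> - 3)"
  have "2 < v / n" using assms False by (simp add: field_simps)
  then have "real j = of_int \<lceil>v / n\<rceil> - 3" by (simp add: j_def)
  then have "real j + 2 < v / n" "v / n \<le> real j + 3" by linarith+
  then have v_layer: "v \<in> {n * (real j + 2)<..n * (real j + 3)}"
    using assms by (simp add: field_simps)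
  have "Phi2 A (v / (4 * n)) \<le> Phi2 A ((real j + 3) / 4)"
    using assms \<open>v / n \<le> real j + 3\<close> by (intro Phi2_mono) (auto simp: field_simps)
  then have "ennreal (Phi2 A (v / (4 * n))) \<le> w j"
    using v_layer by (simp add: w_def ennreal_leI)
  also have "\<dots> \<le> (\<Sum>i. w i)"
    using sum_le_suminf[of w "{j}"] by (simp add: summableI)
  finally show ?thesis by (simp add: w_def add_increasing)
qed

lemma Phi2_integral_le_one_of_tail:
  assumes "0 < A" "A \<le> 1" "0 < n"
    and [measurable]: "g \<in> borel_measurable M"
    and "emeasure M (space M) \<le> 1"
    and tail: "\<And>u s. 1 < u \<Longrightarrow> n * u < s \<Longrightarrow>
      emeasure M {x \<in> space M. s < \<bar>g x\<bar>} \<le> ennreal (exp (- ((u\<^sup>2 - 1) / A)))"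
  shows "(\<integral>\<^sup>+ x. ennreal (Phi2 A (\<bar>g x\<bar> / (4 * n))) \<partial>M) \<le> 1"
proof -
  define c where "c j = ennreal (Phi2 A ((real j + 3) / 4))" for j :: nat
  define S where "S j = {x \<in> space M. \<bar>g x\<bar> \<in> {n * (real j + 2)<..n * (real j + 3)}}" for j :: nat
  have S_sets [measurable]: "S j \<in> sets M" for j
    unfolding S_def by measurable
  have S_le: "emeasure M (S j) \<le> ennreal (exp (- (((real j + 1)\<^sup>2 - 1) / A)))" for j
  proof (cases "j = 0")
    case True
    have "emeasure M (S j) \<le> emeasure M (space M)" by (intro emeasure_mono) (auto simp: S_def)
    then show ?thesis using True assms by simp
  next
    case False
    have "emeasure M (S j) \<le> emeasure M {x \<in> space M. n * (real j + 2) < \<bar>g x\<bar>}"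
      by (intro emeasure_mono) (auto simp: S_def)
    also have "\<dots> \<le> ennreal (exp (- (((real j + 1)\<^sup>2 - 1) / A)))"
      using False assms by (intro tail) auto
    finally show ?thesis .
  qed
  have "(\<integral>\<^sup>+ x. ennreal (Phi2 A (\<bar>g x\<bar> / (4 * n))) \<partial>M)
      \<le> (\<integral>\<^sup>+ x. ennreal (1/4) + (\<Sum>j. c j * indicator (S j) x) \<partial>M)"
    using assms Phi2_quarter_le_layers[of A n]
    by (intro nn_integral_mono) (simp add: c_def S_def indicator_def)
  also have "\<dots> = ennreal (1/4) * emeasure M (space M) + (\<Sum>j. c j * emeasure M (S j))"
    by (simp add: nn_integral_add nn_integral_suminf nn_integral_cmult_indicator)
  also have "\<dots> \<le> ennreal (1/4) * 1 + (\<Sum>j. ennreal (9/16 * (1/5) ^ j))"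
  proof (intro add_mono mult_left_mono suminf_le)
    fix j
    have "c j * emeasure M (S j) \<le> c j * ennreal (exp (- (((real j + 1)\<^sup>2 - 1) / A)))"
      by (intro mult_left_mono S_le) auto
    also have "\<dots> = ennreal (Phi2 A ((real j + 3) / 4) * exp (- (((real j + 1)\<^sup>2 - 1) / A)))"
      by (simp add: c_def ennreal_mult Phi2_nonneg)
    also have "\<dots> \<le> ennreal (9/16 * (1/5) ^ j)"
      using assms by (intro ennreal_leI Phi2_layer_weight_le)
    finally show "c j * emeasure M (S j) \<le> ennreal (9/16 * (1/5) ^ j)" .
  qed (use assms in auto)
  also have "(\<Sum>j. ennreal (9/16 * (1/5::real) ^ j)) = ennreal (45/64)"
  proof (rule suminf_ennreal_eq)
    show "(\<lambda>j. 9/16 * (1/5::real) ^ j) sums (45/64)"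
      using sums_mult[OF geometric_sums[of "1/5::real"], of "9/16"] by simp
  qed simp
  also have "ennreal (1/4) * 1 + ennreal (45/64) \<le> 1"
    by (simp flip: ennreal_plus)
  finally show ?thesis .
qed

lemma emeasure_lebesgue_on_unit_cube:
  "emeasure (lebesgue_on (cbox (0::'a::euclidean_space) One)) (cbox 0 One) = 1"
  by (simp add: emeasure_restrict_space)

lemma rearr_eq_lebesgue_on:
  "rearr f t = Inf (ereal ` {s. 0 \<le> s \<and>
    emeasure (lebesgue_on (cbox 0 One)) {x \<in> cbox (0::'a::euclidean_space) One. s < \<bar>f x\<bar>} \<le> ennreal t})"
  unfolding rearr_def by (simp add: emeasure_restrict_space subset_eq)

lemma rearr_nonneg: "0 \<le> rearr f t"
  unfolding rearr_def by (rule Inf_greatest) auto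

lemma rearr_le:
  assumes "0 \<le> s"
    and "emeasure (lebesgue_on (cbox 0 One)) {x \<in> cbox (0::'a::euclidean_space) One. s < \<bar>f x\<bar>}
      \<le> ennreal t"
  shows "rearr f t \<le> ereal s"
  unfolding rearr_eq_lebesgue_on using assms by (intro Inf_lower imageI) simp

lemma emeasure_abs_greater_le_of_rearr_less:
  fixes f :: "'a::euclidean_space \<Rightarrow> real"
  assumes f: "f \<in> borel_measurable (lebesgue_on (cbox 0 One))" and "rearr f t < ereal s"
  shows "emeasure (lebesgue_on (cbox 0 One)) {x \<in> cbox (0::'a) One. s < \<bar>f x\<bar>} \<le> ennreal t"
proof -
  obtain s' where "s' < s"
    and s': "emeasure (lebesgue_on (cbox 0 One)) {x \<in> cbox (0::'a) One. s' < \<bar>f x\<bar>} \<le> ennreal t"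
    using assms(2) unfolding rearr_eq_lebesgue_on Inf_less_iff by auto
  have "{x \<in> space (lebesgue_on (cbox 0 One)). s' < \<bar>f x\<bar>} \<in> sets (lebesgue_on (cbox (0::'a) One))"
    using f by measurable
  then have "emeasure (lebesgue_on (cbox 0 One)) {x \<in> cbox (0::'a) One. s < \<bar>f x\<bar>}
      \<le> emeasure (lebesgue_on (cbox 0 One)) {x \<in> cbox (0::'a) One. s' < \<bar>f x\<bar>}"
    using \<open>s' < s\<close> by (intro emeasure_mono) auto
  with s' show ?thesis by order
qed

lemma norm1_le_iff:
  assumes "0 \<le> A"
  shows "norm1 A f \<le> ereal c \<longleftrightarrow>
    (\<forall>t\<in>{0<..<1}. rearr f t \<le> ereal (c * sqrt (A * ln (1 / t) + 1)))"
proof -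
  have "rearr f t / ereal q \<le> ereal c \<longleftrightarrow> rearr f t \<le> ereal (c * q)"
    if "t \<in> {0<..<1}" and q: "q = sqrt (A * ln (1 / t) + 1)" for t q
  proof -
    have "0 \<le> A * ln (1 / t)" using assms that by simp
    then have "0 < q" using q by simp
    then show ?thesis by (simp add: ereal_divide_le_pos mult.commute)
  qed
  then show ?thesis unfolding norm1_def SUP_le_iff by blast
qed

lemma norm1_nonneg:
  assumes "0 \<le> A"
  shows "0 \<le> norm1 A f"
  unfolding norm1_def
proof (rule SUP_upper2[of "1/2"])
  have "0 \<le> A * ln 2" using assms by simp
  then show "0 \<le> rearr f (1/2) / ereal (sqrt (A * ln (1 / (1/2)) + 1))"
    by (intro zero_le_divide_ereal rearr_nonneg) simp
qed simp

lemma orlicz_norm_le: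
  assumes "0 < l"
    and "(\<integral>\<^sup>+ x. ennreal (Phi2 A (\<bar>f x\<bar> / l)) \<partial>lebesgue_on (cbox (0::'a::euclidean_space) One)) \<le> 1"
  shows "orlicz_norm A f \<le> ereal l"
  unfolding orlicz_norm_def using assms by (intro Inf_lower imageI) simp

lemma le_orlicz_norm:
  assumes "\<And>l. 0 < l \<Longrightarrow>
    (\<integral>\<^sup>+ x. ennreal (Phi2 A (\<bar>f x\<bar> / l)) \<partial>lebesgue_on (cbox (0::'a::euclidean_space) One)) \<le> 1 \<Longrightarrow>
    c \<le> ereal l"
  shows "c \<le> orlicz_norm A f"
  unfolding orlicz_norm_def using assms by (auto intro!: Inf_greatest)

lemma norm1_le_of_Phi2_integral_le:
  fixes f :: "'a::euclidean_space \<Rightarrow> real"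
  assumes "0 < A" "0 < l"
    and "f \<in> borel_measurable (lebesgue_on (cbox 0 One))"
    and "(\<integral>\<^sup>+ x. ennreal (Phi2 A (\<bar>f x\<bar> / l)) \<partial>lebesgue_on (cbox 0 One)) \<le> 1"
  shows "norm1 A f \<le> ereal l"
  unfolding norm1_le_iff[OF less_imp_le[OF \<open>0 < A\<close>]]
proof
  fix t :: real
  assume t: "t \<in> {0<..<1}"
  then have "0 \<le> A * ln (1 / t)" using assms by simp
  moreover have "emeasure (lebesgue_on (cbox 0 One))
      {x \<in> cbox (0::'a) One. l * sqrt (A * ln (1 / t) + 1) < \<bar>f x\<bar>} \<le> ennreal t"
    using emeasure_abs_greater_le_of_Phi2_integral[OF assms(1,2) _ _ assms(3,4), of t] t by simp
  ultimately show "rearr f t \<le> ereal (l * sqrt (A * ln (1 / t) + 1))"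
    using assms by (intro rearr_le) auto
qed

lemma emeasure_abs_greater_le_of_norm1_le:
  fixes f :: "'a::euclidean_space \<Rightarrow> real"
  assumes "0 < A" "f \<in> borel_measurable (lebesgue_on (cbox 0 One))" "norm1 A f \<le> ereal n"
    and "1 < u" "n * u < s"
  shows "emeasure (lebesgue_on (cbox 0 One)) {x \<in> cbox (0::'a) One. s < \<bar>f x\<bar>}
    \<le> ennreal (exp (- ((u\<^sup>2 - 1) / A)))"
proof -
  define t where "t = exp (- ((u\<^sup>2 - 1) / A))"
  have "1 < u\<^sup>2" using assms by (simp add: one_less_power)
  then have t: "t \<in> {0<..<1}" using assms by (simp add: t_def)
  have "ln (1 / t) = (u\<^sup>2 - 1) / A" by (simp add: t_def ln_div)
  then have "sqrt (A * ln (1 / t) + 1) = u" using assms by simp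
  then have "rearr f t \<le> ereal (n * u)"
    using assms t norm1_le_iff[of A f n] by auto
  also have "\<dots> < ereal s" using assms by simp
  finally show ?thesis
    using emeasure_abs_greater_le_of_rearr_less[OF assms(2)] by (simp add: t_def)
qed

theorem theorem4p9:
  fixes f :: "'a::euclidean_space \<Rightarrow> real" and A :: real
  assumes "0 < A" and "A \<le> 1"
    and "f \<in> borel_measurable (lebesgue_on (cbox (0::'a) One))"
  shows "norm1 A f \<le> orlicz_norm A f \<and> orlicz_norm A f \<le> 4 * norm1 A f"
proof
  show "norm1 A f \<le> orlicz_norm A f"
    using assms by (intro le_orlicz_norm norm1_le_of_Phi2_integral_le)
  show "orlicz_norm A f \<le> 4 * norm1 A f"
  proof (cases "norm1 A f")
    case (real N)
    then have "0 \<le> N" using norm1_nonneg[of A f] assms by simp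
    show ?thesis
    proof (rule ereal_le_epsilon2)
      fix e :: real
      assume "0 < e"
      define n where "n = N + e / 4"
      have "0 < n" and norm1_le: "norm1 A f \<le> ereal n"
        using \<open>0 \<le> N\<close> \<open>0 < e\<close> real by (simp_all add: n_def)
      have "(\<integral>\<^sup>+ x. ennreal (Phi2 A (\<bar>f x\<bar> / (4 * n))) \<partial>lebesgue_on (cbox 0 One)) \<le> 1"
        using assms \<open>0 < n\<close> emeasure_abs_greater_le_of_norm1_le[OF assms(1,3) norm1_le]
        by (intro Phi2_integral_le_one_of_tail) (simp_all add: emeasure_lebesgue_on_unit_cube)
      then have "orlicz_norm A f \<le> ereal (4 * n)"
        using \<open>0 < n\<close> by (intro orlicz_norm_le) auto
      then show "orlicz_norm A f \<le> 4 * norm1 A f + ereal e"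
        by (simp add: real n_def algebra_simps)
    qed
  qed (use norm1_nonneg[of A f] assms in auto)
qed

end
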